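(* Let $\beta>1$ be an Ito-Sadahiro number, with $d_{-\beta}(l_\beta)=d_1\cdots d_m\,(d_{m+1}\cdots d_{m+p})^\omega$, where $m\ge0$, $p\ge1$ are minimal such that $d_{-\beta}(l_\beta)$ can be written in this form, and let $$P(x)=(-x)^{m+1}\sum_{i=0}^{p-1}(-x)^i+\big((-x)^p-1\big)\sum_{i=1}^m d_i(-x)^{m-i}+\sum_{i=m+1}^{m+p}d_i(-x)^{m+p-i}$$ be its Ito-Sadahiro polynomial. Then every complex root $\gamma\neq\beta$ of $P$ satisfies $|\gamma|<2$. In particular, every algebraic conjugate $\gamma\ne\beta$ of $\beta$ satisfies $|\gamma|<2$.
   Context: For $\beta>1$ put $l_\beta=-\frac{\beta}{\beta+1}$, $r_\beta=\frac{1}{\beta+1}$ and $I_\beta=[l_\beta,r_\beta)$. Define $T:I_\beta\to I_\beta$ by $T(x)=-\beta x-\lfloor -\beta x-l_\beta\rfloor$. The $(-\beta)$-expansion of $x\in I_\beta$ is the infinite word $d_{-\beta}(x)=x_1x_2x_3\cdots$ with $x_i=\lfloor -\beta T^{i-1}(x)-l_\beta\rfloor$ for $i\ge1$; then $x=\sum_{i\ge1}x_i(-\beta)^{-i}$. The notation $w^\omega$ denotes infinite repetition of the finite word $w$. A number $\beta>1$ is an Ito-Sadahiro number if $d_{-\beta}(l_\beta)$ is eventually periodic. *)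

theory Defs
  imports Complex_Main "HOL-Computational_Algebra.Computational_Algebra"
begin

definition nb_l :: "real \<Rightarrow> real" where
  "nb_l \<beta> = - \<beta> / (\<beta> + 1)"

definition nb_r :: "real \<Rightarrow> real" where
  "nb_r \<beta> = 1 / (\<beta> + 1)"

definition nb_T :: "real \<Rightarrow> real \<Rightarrow> real" where
  "nb_T \<beta> x = - \<beta> * x - of_int \<lfloor>- \<beta> * x - nb_l \<beta>\<rfloor>"

text \<open>Digits of the (-beta)-expansion, indexed from 1:
  nb_digit beta x i = x_i = floor(-beta T^(i-1)(x) - l_beta) for i >= 1.\<close>
definition nb_digit :: "real \<Rightarrow> real \<Rightarrow> nat \<Rightarrow> int" where
  "nb_digit \<beta> x i = \<lfloor>- \<beta> * ((nb_T \<beta>) ^^ (i - 1)) x - nb_l \<beta>\<rfloor>"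

definition has_preperiod_period :: "(nat \<Rightarrow> int) \<Rightarrow> nat \<Rightarrow> nat \<Rightarrow> bool" where
  "has_preperiod_period d m p \<longleftrightarrow> p \<ge> 1 \<and> (\<forall>i. i > m \<longrightarrow> d (i + p) = d i)"

definition eventually_periodic :: "(nat \<Rightarrow> int) \<Rightarrow> bool" where
  "eventually_periodic d \<longleftrightarrow> (\<exists>m p. has_preperiod_period d m p)"

definition Ito_Sadahiro_number :: "real \<Rightarrow> bool" where
  "Ito_Sadahiro_number \<beta> \<longleftrightarrow> \<beta> > 1 \<and> eventually_periodic (nb_digit \<beta> (nb_l \<beta>))"

definition IS_poly :: "real \<Rightarrow> nat \<Rightarrow> nat \<Rightarrow> complex \<Rightarrow> complex" where
  "IS_poly \<beta> m p x =
     (let d = (\<lambda>i. of_int (nb_digit \<beta> (nb_l \<beta>) i) :: complex) in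
       (- x) ^ (m + 1) * (\<Sum>i<p. (- x) ^ i)
       + ((- x) ^ p - 1) * (\<Sum>i=1..m. d i * (- x) ^ (m - i))
       + (\<Sum>i=m+1..m+p. d i * (- x) ^ (m + p - i)))"

definition alg_conjugate :: "real \<Rightarrow> complex \<Rightarrow> bool" where
  "alg_conjugate \<beta> \<gamma> \<longleftrightarrow>
     (\<exists>q :: rat poly. irreducible q \<and>
        poly (map_poly of_rat q) (complex_of_real \<beta>) = 0 \<and>
        poly (map_poly of_rat q) \<gamma> = 0)"

end

theory Submission
  imports Defs "HOL-Computational_Algebra.Field_as_Ring"
begin

text \<open>
  Let t_k = T^k(l_\<beta>) be the orbit of the left endpoint, so that d_(k+1) = -\<beta> t_k - t_(k+1).
  Since T multiplies distances by \<beta> > 1 while the orbit stays in an interval of length 1,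
  eventual periodicity of the digits forces t_(k+p) = t_k for k \<ge> m.

  Put y = -x and H_n(y) = y^n + \<Sum>_(k=1..n) (t_(k-1) - t_k) y^(n-k). Telescoping the digit
  relation, the orbit terms cancel because (1 + \<beta>) t_0 = -\<beta>, and one obtains
  (y + \<beta>) (H_(m+p)(y) - H_m(y)) = (y - 1) P(x); in particular P(\<beta>) = 0.

  Now let P(\<gamma>) = 0 with \<gamma> \<noteq> \<beta> and |\<gamma>| \<ge> 2, and put z = -1/\<gamma>. The partial sums
  F_n = z^n H_n(-\<gamma>) = 1 + \<Sum>_(k=1..n) (t_(k-1) - t_k) z^k satisfy F_(m+p) = z^p F_m, and the
  periodicity of the gaps t_(k-1) - t_k propagates this to F_(m+jp) = z^(jp) F_m \<longrightarrow> 0.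
  But every gap has modulus below 1 and |z| \<le> 1/2, so |F_n| \<ge> (1 - |t_0 - t_1|)/2 > 0.

  Algebraic conjugates of \<beta> are roots of P because P has rational coefficients and vanishes
  at \<beta>.
\<close>

definition nb_orbit :: "real \<Rightarrow> nat \<Rightarrow> real" where
  "nb_orbit \<beta> k = (nb_T \<beta> ^^ k) (nb_l \<beta>)"

lemma nb_T_bounds: "nb_l \<beta> \<le> nb_T \<beta> x" "nb_T \<beta> x < nb_l \<beta> + 1"
  unfolding nb_T_def by linarith+

lemma nb_orbit_bounds: "nb_l \<beta> \<le> nb_orbit \<beta> k" "nb_orbit \<beta> k < nb_l \<beta> + 1"
  by (cases k; simp add: nb_orbit_def nb_T_bounds)+

lemma nb_orbit_Suc:
  "nb_orbit \<beta> (Suc k) = - \<beta> * nb_orbit \<beta> k - nb_digit \<beta> (nb_l \<beta>) (Suc k)"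
  by (simp add: nb_orbit_def nb_digit_def nb_T_def)

lemma bounded_power_mult_eq_0:
  fixes c x B :: real
  assumes "1 < \<bar>c\<bar>" and "\<And>n. \<bar>c ^ n * x\<bar> \<le> B"
  shows "x = 0"
proof (rule ccontr)
  assume "x \<noteq> 0"
  then obtain n where "B / \<bar>x\<bar> < \<bar>c\<bar> ^ n"
    using real_arch_pow[OF assms(1)] by blast
  then have "B < \<bar>c ^ n * x\<bar>"
    using \<open>x \<noteq> 0\<close> by (simp add: abs_mult power_abs divide_less_eq)
  with assms(2)[of n] show False by simp
qed

lemma nb_orbit_periodic:
  assumes "\<beta> > 1" and "has_preperiod_period (nb_digit \<beta> (nb_l \<beta>)) m p" and "m \<le> k"
  shows "nb_orbit \<beta> (k + p) = nb_orbit \<beta> k"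
proof -
  define u where "u j = nb_orbit \<beta> (k + j + p) - nb_orbit \<beta> (k + j)" for j
  have "u (Suc j) = - \<beta> * u j" for j
  proof -
    have "m < Suc (k + j)"
      using assms(3) by simp
    then have "nb_digit \<beta> (nb_l \<beta>) (Suc (k + j + p)) = nb_digit \<beta> (nb_l \<beta>) (Suc (k + j))"
      using assms(2) unfolding has_preperiod_period_def by (metis add_Suc)
    then show ?thesis
      by (simp add: u_def nb_orbit_Suc algebra_simps)
  qed
  then have "u j = (- \<beta>) ^ j * u 0" for j
    by (induction j) simp_all
  moreover have "\<bar>u j\<bar> \<le> 1" for j
    using nb_orbit_bounds[of \<beta> "k + j + p"] nb_orbit_bounds[of \<beta> "k + j"]
    unfolding u_def by linarith
  ultimately have "\<bar>(- \<beta>) ^ j * u 0\<bar> \<le> 1" for j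
    by metis
  then have "u 0 = 0"
    by (rule bounded_power_mult_eq_0[rotated]) (use assms(1) in simp)
  then show ?thesis
    by (simp add: u_def)
qed

lemma horner_sum_Suc:
  fixes f :: "nat \<Rightarrow> 'a::comm_semiring_1"
  shows "(\<Sum>i=1..Suc n. f i * y ^ (Suc n - i)) = y * (\<Sum>i=1..n. f i * y ^ (n - i)) + f (Suc n)"
proof -
  have "(\<Sum>i=1..n. f i * y ^ (Suc n - i)) = y * (\<Sum>i=1..n. f i * y ^ (n - i))"
    unfolding sum_distrib_left by (rule sum.cong) (auto simp: Suc_diff_le mult.left_commute)
  then show ?thesis by simp
qed

lemma horner_sum_add:
  fixes f :: "nat \<Rightarrow> 'a::comm_semiring_1"
  shows "(\<Sum>i=1..m+p. f i * y ^ (m + p - i))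
    = y ^ p * (\<Sum>i=1..m. f i * y ^ (m - i)) + (\<Sum>i=m+1..m+p. f i * y ^ (m + p - i))"
proof -
  have "(\<Sum>i=1..m. f i * y ^ (m + p - i)) = y ^ p * (\<Sum>i=1..m. f i * y ^ (m - i))"
    unfolding sum_distrib_left
  proof (rule sum.cong)
    fix i assume "i \<in> {1..m}"
    then have "m + p - i = p + (m - i)" by simp
    then show "f i * y ^ (m + p - i) = y ^ p * (f i * y ^ (m - i))"
      by (simp add: power_add mult.left_commute)
  qed simp
  moreover have "(\<Sum>i=1..m+p. f i * y ^ (m + p - i))
      = (\<Sum>i=1..m. f i * y ^ (m + p - i)) + (\<Sum>i=m+1..m+p. f i * y ^ (m + p - i))"
    by (rule sum.ub_add_nat) simp
  ultimately show ?thesis by simp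
qed

lemma horner_digit_orbit_identity:
  fixes t d :: "nat \<Rightarrow> 'a::comm_ring_1" and b y :: 'a
  assumes d: "\<And>k. d (Suc k) = - b * t k - t (Suc k)" and t0: "(1 + b) * t 0 = - b"
  shows "(y + b) * (y ^ n + (\<Sum>k=1..n. (t (k - 1) - t k) * y ^ (n - k)))
    = (y - 1) * (\<Sum>k=1..n. d k * y ^ (n - k)) + y ^ Suc n - (1 + b) * t n"
proof (induction n)
  case 0
  show ?case using t0 by (simp add: algebra_simps)
next
  case (Suc n)
  have "(y + b) * (y ^ Suc n + (\<Sum>k=1..Suc n. (t (k - 1) - t k) * y ^ (Suc n - k)))
      = y * ((y + b) * (y ^ n + (\<Sum>k=1..n. (t (k - 1) - t k) * y ^ (n - k))))
        + (y + b) * (t n - t (Suc n))"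
    by (simp only: horner_sum_Suc) (simp add: algebra_simps)
  also have "\<dots> = (y - 1) * (\<Sum>k=1..Suc n. d k * y ^ (Suc n - k)) + y ^ Suc (Suc n) - (1 + b) * t (Suc n)"
    unfolding Suc horner_sum_Suc d by (simp add: algebra_simps)
  finally show ?case .
qed

lemma IS_poly_minus:
  "IS_poly \<beta> m p (- y) = y ^ (m + 1) * (\<Sum>i<p. y ^ i)
    + (\<Sum>i=1..m+p. of_int (nb_digit \<beta> (nb_l \<beta>) i) * y ^ (m + p - i))
    - (\<Sum>i=1..m. of_int (nb_digit \<beta> (nb_l \<beta>) i) * y ^ (m - i))"
  unfolding IS_poly_def Let_def horner_sum_add by (simp add: algebra_simps)

lemma IS_poly_orbit_identity:
  fixes y :: complex
  assumes "\<beta> > 1" and "has_preperiod_period (nb_digit \<beta> (nb_l \<beta>)) m p"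
  defines "t \<equiv> \<lambda>k. complex_of_real (nb_orbit \<beta> k)"
  defines "H \<equiv> \<lambda>n. y ^ n + (\<Sum>k=1..n. (t (k - 1) - t k) * y ^ (n - k))"
  shows "(y + of_real \<beta>) * (H (m + p) - H m) = (y - 1) * IS_poly \<beta> m p (- y)"
proof -
  define A where "A n = (\<Sum>i=1..n. of_int (nb_digit \<beta> (nb_l \<beta>) i) * y ^ (n - i))" for n
  have "of_int (nb_digit \<beta> (nb_l \<beta>) (Suc k)) = - of_real \<beta> * t k - t (Suc k)" for k
    unfolding t_def nb_orbit_Suc by simp
  moreover have "(1 + \<beta>) * nb_l \<beta> = - \<beta>"
    using assms(1) by (simp add: nb_l_def field_simps)
  then have "(1 + of_real \<beta>) * t 0 = - of_real \<beta>"
    unfolding t_def nb_orbit_def by (metis funpow_0 of_real_1 of_real_add of_real_minus of_real_mult)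
  ultimately have H: "(y + of_real \<beta>) * H n = (y - 1) * A n + y ^ Suc n - (1 + of_real \<beta>) * t n" for n
    unfolding H_def A_def by (rule horner_digit_orbit_identity)
  have "t (m + p) = t m"
    unfolding t_def using nb_orbit_periodic[OF assms(1,2) order_refl] by simp
  then have "(y + of_real \<beta>) * (H (m + p) - H m) = (y - 1) * (A (m + p) - A m) + y ^ (m + 1) * (y ^ p - 1)"
    unfolding right_diff_distrib H by (simp add: algebra_simps power_add)
  also have "\<dots> = (y - 1) * IS_poly \<beta> m p (- y)"
    unfolding IS_poly_minus A_def power_diff_1_eq[of y p] by (simp add: algebra_simps)
  finally show ?thesis .
qed

lemma IS_poly_root:
  assumes "\<beta> > 1" and "has_preperiod_period (nb_digit \<beta> (nb_l \<beta>)) m p"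
  shows "IS_poly \<beta> m p (of_real \<beta>) = 0"
proof -
  have "complex_of_real (- \<beta> - 1) * IS_poly \<beta> m p (of_real \<beta>) = 0"
    using IS_poly_orbit_identity[OF assms, of "- of_real \<beta>"] by simp
  moreover have "complex_of_real (- \<beta> - 1) \<noteq> 0"
    using assms(1) by (subst of_real_eq_0_iff) linarith
  ultimately show ?thesis by (metis mult_eq_0_iff)
qed

lemma reversed_power_sum:
  fixes e :: "nat \<Rightarrow> 'a::comm_semiring_1"
  assumes "y * z = 1"
  shows "y ^ n * (1 + (\<Sum>k=1..n. e k * z ^ k)) = y ^ n + (\<Sum>k=1..n. e k * y ^ (n - k))"
proof -
  have "y ^ n * z ^ k = y ^ (n - k)" if "k \<le> n" for k
  proof -
    have "y ^ n = y ^ (n - k) * y ^ k"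
      using that by (simp flip: power_add)
    then have "y ^ n * z ^ k = y ^ (n - k) * (y * z) ^ k"
      by (simp add: power_mult_distrib mult.assoc)
    then show ?thesis using assms by simp
  qed
  then show ?thesis
    by (simp add: distrib_left sum_distrib_left mult.left_commute)
qed

lemma norm_one_plus_power_sum_ge:
  fixes e :: "nat \<Rightarrow> complex" and z :: complex
  assumes z: "norm z \<le> 1/2" and e: "\<And>k. norm (e k) \<le> 1"
  shows "(1 - norm (e 1)) / 2 \<le> norm (1 + (\<Sum>k=1..n. e k * z ^ k))"
proof -
  have term_bound: "norm (e k * z ^ k) \<le> norm (e k) * (1/2) ^ k" for k
    unfolding norm_mult norm_power by (intro mult_left_mono power_mono z) simp_all
  have "norm (\<Sum>k=1..n. e k * z ^ k) \<le> norm (e 1) / 2 + 1/2"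
  proof (cases "n = 0")
    case False
    then have "{1..n} = insert 1 {2..n}" by auto
    have "norm (\<Sum>k=1..n. e k * z ^ k) \<le> (\<Sum>k=1..n. norm (e k) * (1/2) ^ k)"
      by (intro norm_sum[THEN order_trans] sum_mono term_bound)
    also have "\<dots> = norm (e 1) / 2 + (\<Sum>k=2..n. norm (e k) * (1/2) ^ k)"
      unfolding \<open>{1..n} = insert 1 {2..n}\<close> by simp
    also have "(\<Sum>k=2..n. norm (e k) * (1/2) ^ k) \<le> (\<Sum>k=2..n. (1/2::real) ^ k)"
      by (intro sum_mono mult_left_le_one_le e) simp_all
    also have "\<dots> \<le> 1/2"
      by (simp add: sum_gp power2_eq_square)
    finally show ?thesis by simp
  qed simp
  moreover have "1 - norm (\<Sum>k=1..n. e k * z ^ k) \<le> norm (1 + (\<Sum>k=1..n. e k * z ^ k))"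
    using norm_diff_ineq[of "1::complex"] by simp
  ultimately show ?thesis by (simp add: field_simps)
qed

lemma power_sum_periodic_tail:
  fixes e :: "nat \<Rightarrow> 'a::comm_ring_1" and z :: 'a
  defines "F \<equiv> \<lambda>n. 1 + (\<Sum>k=1..n. e k * z ^ k)"
  assumes periodic: "\<And>k. m < k \<Longrightarrow> e (k + p) = e k" and start: "F (m + p) = z ^ p * F m"
  shows "F (m + j * p) = z ^ (j * p) * F m"
proof -
  have shift: "F (n + p) = z ^ p * F n" if "m \<le> n" for n
    using that
  proof (induction n rule: dec_induct)
    case (step n)
    have "F (Suc n + p) = F (n + p) + e (Suc n) * z ^ (Suc n + p)"
      using periodic[of "Suc n"] step.hyps by (simp add: F_def)
    also have "\<dots> = z ^ p * F (Suc n)"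
      unfolding step.IH by (simp add: F_def algebra_simps power_add)
    finally show ?case .
  qed (rule start)
  show ?thesis
  proof (induction j)
    case (Suc j)
    have "F (m + Suc j * p) = F ((m + j * p) + p)"
      by (simp add: algebra_simps)
    also have "\<dots> = z ^ (Suc j * p) * F m"
      unfolding shift[of "m + j * p", simplified] Suc by (simp add: power_add mult.assoc)
    finally show ?case .
  qed simp
qed

lemma power_sum_no_periodic_shift:
  fixes e :: "nat \<Rightarrow> complex" and z :: complex
  defines "F \<equiv> \<lambda>n. 1 + (\<Sum>k=1..n. e k * z ^ k)"
  assumes z: "norm z \<le> 1/2" and e: "\<And>k. norm (e k) \<le> 1" and "norm (e 1) < 1"
    and periodic: "\<And>k. m < k \<Longrightarrow> e (k + p) = e k" and "p \<ge> 1"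
  shows "F (m + p) \<noteq> z ^ p * F m"
proof
  assume start: "F (m + p) = z ^ p * F m"
  define \<delta> where "\<delta> = (1 - norm (e 1)) / 2"
  have "\<delta> > 0"
    using \<open>norm (e 1) < 1\<close> by (simp add: \<delta>_def)
  have "\<bar>2 ^ j * \<delta>\<bar> \<le> norm (F m)" for j
  proof -
    have "\<delta> \<le> norm (F (m + j * p))"
      unfolding \<delta>_def F_def using z e by (rule norm_one_plus_power_sum_ge)
    also have "\<dots> = norm z ^ (j * p) * norm (F m)"
      using power_sum_periodic_tail[OF periodic start[unfolded F_def]]
      by (simp add: F_def norm_mult norm_power)
    also have "\<dots> \<le> (1/2) ^ (j * p) * norm (F m)"
      by (intro mult_right_mono power_mono z) simp_all
    also have "\<dots> \<le> (1/2) ^ j * norm (F m)"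
      using \<open>p \<ge> 1\<close> by (intro mult_right_mono power_decreasing) simp_all
    also have "\<dots> = norm (F m) / 2 ^ j"
      by (simp add: power_one_over)
    finally show ?thesis
      using \<open>\<delta> > 0\<close> by (simp add: pos_le_divide_eq mult.commute)
  qed
  then have "\<delta> = 0"
    by (intro bounded_power_mult_eq_0[of 2]) simp_all
  with \<open>\<delta> > 0\<close> show False
    by simp
qed

lemma IS_poly_root_norm_less_2:
  assumes "\<beta> > 1" and "has_preperiod_period (nb_digit \<beta> (nb_l \<beta>)) m p"
    and "IS_poly \<beta> m p \<gamma> = 0" and "\<gamma> \<noteq> of_real \<beta>"
  shows "cmod \<gamma> < 2"
proof (rule ccontr)
  assume "\<not> cmod \<gamma> < 2"
  define y where "y = - \<gamma>"
  define z where "z = 1 / y"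
  define e where "e k = complex_of_real (nb_orbit \<beta> (k - 1) - nb_orbit \<beta> k)" for k
  define F where "F n = 1 + (\<Sum>k=1..n. e k * z ^ k)" for n
  have "cmod y \<ge> 2"
    using \<open>\<not> cmod \<gamma> < 2\<close> by (simp add: y_def)
  then have "y \<noteq> 0" and z: "norm z \<le> 1/2"
    by (auto simp: z_def norm_divide divide_simps)
  then have yz: "y * z = 1"
    by (simp add: z_def)
  have "(y + of_real \<beta>) * (y ^ (m + p) * F (m + p) - y ^ m * F m) = 0"
    using IS_poly_orbit_identity[OF assms(1,2), of y] assms(3)
    unfolding F_def reversed_power_sum[OF yz] by (simp add: e_def y_def)
  moreover have "y + of_real \<beta> \<noteq> 0"
    using assms(4) by (simp add: y_def)
  ultimately have "y ^ (m + p) * F (m + p) = y ^ m * F m"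
    by simp
  then have "z ^ (m + p) * y ^ (m + p) * F (m + p) = z ^ (m + p) * y ^ m * F m"
    by (simp only: mult.assoc)
  moreover have "z ^ (m + p) * y ^ (m + p) = 1" and "z ^ (m + p) * y ^ m = z ^ p"
    using yz by (simp_all add: power_add algebra_simps flip: power_mult_distrib)
  ultimately have "F (m + p) = z ^ p * F m"
    by simp
  moreover have "norm (e k) < 1" for k
    unfolding e_def norm_of_real using nb_orbit_bounds[of \<beta> k] nb_orbit_bounds[of \<beta> "k - 1"]
    by linarith
  moreover have "e (k + p) = e k" if "m < k" for k
    using nb_orbit_periodic[OF assms(1,2), of "k - 1"] nb_orbit_periodic[OF assms(1,2), of k] that
    by (simp add: e_def)
  moreover have "p \<ge> 1"
    using assms(2) by (simp add: has_preperiod_period_def)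
  ultimately show False
    using power_sum_no_periodic_shift[OF z, of e m p] less_imp_le unfolding F_def by blast
qed

lemma map_poly_of_rat_add:
  "map_poly (of_rat :: rat \<Rightarrow> 'a::field_char_0) (p + q) = map_poly of_rat p + map_poly of_rat q"
  by (rule poly_eqI) (simp add: coeff_map_poly of_rat_add)

lemma map_poly_of_rat_diff:
  "map_poly (of_rat :: rat \<Rightarrow> 'a::field_char_0) (p - q) = map_poly of_rat p - map_poly of_rat q"
  by (rule poly_eqI) (simp add: coeff_map_poly of_rat_diff)

lemma map_poly_of_rat_mult:
  "map_poly (of_rat :: rat \<Rightarrow> 'a::field_char_0) (p * q) = map_poly of_rat p * map_poly of_rat q"
  by (rule poly_eqI) (simp add: coeff_map_poly coeff_mult of_rat_sum of_rat_mult)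

lemma map_poly_of_rat_power:
  "map_poly (of_rat :: rat \<Rightarrow> 'a::field_char_0) (p ^ n) = map_poly of_rat p ^ n"
  by (induction n) (simp_all add: map_poly_of_rat_mult)

lemma map_poly_of_rat_sum:
  "map_poly (of_rat :: rat \<Rightarrow> 'a::field_char_0) (\<Sum>i\<in>A. f i) = (\<Sum>i\<in>A. map_poly of_rat (f i))"
  by (induction A rule: infinite_finite_induct) (simp_all add: map_poly_of_rat_add)

definition IS_rat_poly :: "real \<Rightarrow> nat \<Rightarrow> nat \<Rightarrow> rat poly" where
  "IS_rat_poly \<beta> m p =
     [:0, -1:] ^ (m + 1) * (\<Sum>i<p. [:0, -1:] ^ i)
     + ([:0, -1:] ^ p - 1) * (\<Sum>i=1..m. [:of_int (nb_digit \<beta> (nb_l \<beta>) i):] * [:0, -1:] ^ (m - i))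
     + (\<Sum>i=m+1..m+p. [:of_int (nb_digit \<beta> (nb_l \<beta>) i):] * [:0, -1:] ^ (m + p - i))"

lemma poly_IS_rat_poly: "poly (map_poly of_rat (IS_rat_poly \<beta> m p)) x = IS_poly \<beta> m p x"
  unfolding IS_rat_poly_def IS_poly_def Let_def map_poly_of_rat_add map_poly_of_rat_diff
    map_poly_of_rat_mult map_poly_of_rat_power map_poly_of_rat_sum
  by (simp add: map_poly_pCons poly_sum)

lemma irreducible_dvd_if_common_root:
  fixes q r :: "rat poly" and a :: "'a::field_char_0"
  assumes "irreducible q" and "poly (map_poly of_rat q) a = 0" and "poly (map_poly of_rat r) a = 0"
  shows "q dvd r"
proof (rule ccontr)
  assume "\<not> q dvd r"
  with \<open>irreducible q\<close> have "gcd q r = 1"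
    by (metis coprime_iff_gcd_eq_1 irreducible_imp_prime_elem_gcd prime_elem_imp_coprime)
  then have "fst (bezout_coefficients q r) * q + snd (bezout_coefficients q r) * r = 1"
    by (metis bezout_coefficients_fst_snd)
  then have "poly (map_poly of_rat (fst (bezout_coefficients q r) * q + snd (bezout_coefficients q r) * r)) a = 1"
    by simp
  with assms(2,3) show False
    by (simp add: map_poly_of_rat_add map_poly_of_rat_mult)
qed

lemma IS_poly_root_if_alg_conjugate:
  assumes "\<beta> > 1" and "has_preperiod_period (nb_digit \<beta> (nb_l \<beta>)) m p"
    and "alg_conjugate \<beta> \<gamma>"
  shows "IS_poly \<beta> m p \<gamma> = 0"
proof -
  obtain q where q: "irreducible q" "poly (map_poly of_rat q) (complex_of_real \<beta>) = 0"
    "poly (map_poly of_rat q) \<gamma> = 0"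
    using assms(3) unfolding alg_conjugate_def by blast
  have "poly (map_poly of_rat (IS_rat_poly \<beta> m p)) (complex_of_real \<beta>) = 0"
    unfolding poly_IS_rat_poly by (rule IS_poly_root[OF assms(1,2)])
  then have "q dvd IS_rat_poly \<beta> m p"
    by (rule irreducible_dvd_if_common_root[OF q(1,2)])
  then obtain s where "IS_rat_poly \<beta> m p = q * s"
    by (elim dvdE)
  then have "IS_poly \<beta> m p \<gamma> = poly (map_poly of_rat q) \<gamma> * poly (map_poly of_rat s) \<gamma>"
    by (simp only: map_poly_of_rat_mult poly_mult flip: poly_IS_rat_poly)
  with q(3) show ?thesis
    by simp
qed

theorem theorem1:
  fixes \<beta> :: real and m p :: nat
  assumes "\<beta> > 1"
    and "Ito_Sadahiro_number \<beta>"
    and "has_preperiod_period (nb_digit \<beta> (nb_l \<beta>)) m p"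
    and "\<And>m' p'. has_preperiod_period (nb_digit \<beta> (nb_l \<beta>)) m' p' \<Longrightarrow> m \<le> m' \<and> p \<le> p'"
  shows "(\<forall>\<gamma>. IS_poly \<beta> m p \<gamma> = 0 \<and> \<gamma> \<noteq> complex_of_real \<beta> \<longrightarrow> cmod \<gamma> < 2)
       \<and> (\<forall>\<gamma>. alg_conjugate \<beta> \<gamma> \<and> \<gamma> \<noteq> complex_of_real \<beta> \<longrightarrow> cmod \<gamma> < 2)"
  using IS_poly_root_norm_less_2[OF assms(1,3)] IS_poly_root_if_alg_conjugate[OF assms(1,3)]
  by blast

end
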